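(* Let $G$ be a connected graph with minimum degree $\delta(G)\geq 3$, and let $v\in V(G)$. Suppose every vertex of $N_i(v)$ for $i=2,3,\ldots,\epsilon(v)-1$ has exactly two predecessors, each $N_i(v)$ is an independent set, and $|N_j(v)|=|N_{j-1}(v)|=|N_{j-2}(v)|=3$ for some index $3\le j\le \epsilon(v)-1$. Then $q(G)\geq 3$.
   Context: For a graph $G$ on $n$ vertices, $\mathcal{S}(G)$ is the set of real symmetric $n\times n$ matrices $A=[a_{ij}]$ with $a_{ij}\neq0$ for $i\ne j$ iff $\{i,j\}\in E(G)$ (diagonal unrestricted); $q(G)$ is the minimum number of distinct eigenvalues of a matrix in $\mathcal{S}(G)$. For $v\in V(G)$, $N_i(v)$ is the set of vertices at distance exactly $i$ from $v$, and $\epsilon(v)$ is the maximum distance from $v$ to a vertex of $G$. If $u\in N_{i-1}(v)$ and $w\in N_i(v)$ are adjacent, $u$ is a predecessor of $w$ and $w$ a successor of $u$. *)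

theory Defs
  imports "HOL-Analysis.Analysis"
begin

definition simple_graph :: "('n::finite \<Rightarrow> 'n \<Rightarrow> bool) \<Rightarrow> bool" where
  "simple_graph E \<longleftrightarrow> (\<forall>u. \<not> E u u) \<and> (\<forall>u w. E u w \<longrightarrow> E w u)"

definition connected_graph :: "('n::finite \<Rightarrow> 'n \<Rightarrow> bool) \<Rightarrow> bool" where
  "connected_graph E \<longleftrightarrow> (\<forall>u w. E\<^sup>*\<^sup>* u w)"

definition degree :: "('n::finite \<Rightarrow> 'n \<Rightarrow> bool) \<Rightarrow> 'n \<Rightarrow> nat" where
  "degree E u = card {w. E u w}"

definition gdist :: "('n::finite \<Rightarrow> 'n \<Rightarrow> bool) \<Rightarrow> 'n \<Rightarrow> 'n \<Rightarrow> nat" where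
  "gdist E u w = (LEAST k. (E ^^ k) u w)"

definition layer :: "('n::finite \<Rightarrow> 'n \<Rightarrow> bool) \<Rightarrow> 'n \<Rightarrow> nat \<Rightarrow> 'n set" where
  "layer E v i = {w. gdist E v w = i}"

definition ecc :: "('n::finite \<Rightarrow> 'n \<Rightarrow> bool) \<Rightarrow> 'n \<Rightarrow> nat" where
  "ecc E v = Max (range (gdist E v))"

definition predecessors :: "('n::finite \<Rightarrow> 'n \<Rightarrow> bool) \<Rightarrow> 'n \<Rightarrow> 'n \<Rightarrow> 'n set" where
  "predecessors E v w = {u. gdist E v u + 1 = gdist E v w \<and> E u w}"

definition independent_set :: "('n::finite \<Rightarrow> 'n \<Rightarrow> bool) \<Rightarrow> 'n set \<Rightarrow> bool" where
  "independent_set E S \<longleftrightarrow> (\<forall>a\<in>S. \<forall>b\<in>S. \<not> E a b)"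

definition SG :: "('n::finite \<Rightarrow> 'n \<Rightarrow> bool) \<Rightarrow> (real^'n^'n) set" where
  "SG E = {A. (\<forall>i j. A$i$j = A$j$i) \<and> (\<forall>i j. i \<noteq> j \<longrightarrow> (A$i$j \<noteq> 0 \<longleftrightarrow> E i j))}"

definition is_eigenvalue :: "real^'n^'n \<Rightarrow> real \<Rightarrow> bool" where
  "is_eigenvalue A c \<longleftrightarrow> (\<exists>x. x \<noteq> 0 \<and> A *v x = c *\<^sub>R x)"

definition num_distinct_eigenvalues :: "real^'n^'n \<Rightarrow> nat" where
  "num_distinct_eigenvalues A = card {c. is_eigenvalue A c}"

definition qG :: "('n::finite \<Rightarrow> 'n \<Rightarrow> bool) \<Rightarrow> nat" where
  "qG E = (LEAST k. \<exists>A\<in>SG E. num_distinct_eigenvalues A = k)"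

end

theory Submission
  imports Defs
begin

text \<open>If A \<in> S(G) had at most two eigenvalues a and b, then, A being symmetric and hence
diagonalisable, (A - a)(A - b) = 0, so A ** A vanishes wherever both A and the identity do. Its
(x, z) entry is the sum of A$x$k * A$k$z over the common neighbours k of x and z, so it cannot vanish
for distinct non-adjacent vertices x, z with exactly one common neighbour. Such vertices exist in the
layers N_{j-2} and N_j: if the two predecessors of every vertex of N_j had the same predecessor sets,
then, since N_{j-1} has only three vertices, all of N_{j-1} would have the same two predecessors, which
cannot account for the three vertices of N_{j-2}, each of which has a successor.\<close>

lemma symmetric_matrix_inner_commute:
  fixes A :: "real^'n^'n"
  assumes "transpose A = A"
  shows "(A *v x) \<bullet> y = x \<bullet> (A *v y)"
  by (metis assms dot_lmul_matrix inner_commute transpose_matrix_vector)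

lemma nonneg_eq_0_if_quadratic_nonpos:
  fixes r q :: real
  assumes quad: "\<And>t. 2 * t * r + t\<^sup>2 * q \<le> 0" and "r \<ge> 0"
  shows "r = 0"
proof (rule ccontr)
  assume "r \<noteq> 0"
  with \<open>r \<ge> 0\<close> have r: "r > 0" by simp
  define t where "t = r / (\<bar>q\<bar> + 1)"
  have t: "t > 0" "t * \<bar>q\<bar> < r" using r by (auto simp: t_def field_simps)
  have "t\<^sup>2 * q \<ge> - (t * (t * \<bar>q\<bar>))"
    using mult_left_mono[of "- \<bar>q\<bar>" q "t * t"] by (simp add: power2_eq_square mult.assoc)
  moreover have "t * (t * \<bar>q\<bar>) < t * r" using t by simp
  moreover have "t * r > 0" using t r by simp
  ultimately have "2 * t * r + t\<^sup>2 * q > 0" by (simp add: mult.assoc)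
  with quad show False by (metis not_le)
qed

lemma rayleigh_quotient_maximum:
  fixes A :: "real^'n^'n"
  assumes W: "subspace W" and "W \<noteq> {0}"
  obtains x where "x \<in> W" "norm x = 1"
    "\<And>y. y \<in> W \<Longrightarrow> y \<bullet> (A *v y) \<le> (x \<bullet> (A *v x)) * (y \<bullet> y)"
proof -
  define K where "K = sphere 0 1 \<inter> W"
  have "compact K" unfolding K_def
    by (rule compact_Int_closed) (simp_all add: W closed_subspace)
  obtain x1 where x1: "x1 \<in> W" "x1 \<noteq> 0" using assms subspace_0 by blast
  then have "(1 / norm x1) *\<^sub>R x1 \<in> K" using W by (simp add: K_def subspace_scale)
  then have "K \<noteq> {}" by blast
  moreover have "continuous_on K (\<lambda>x. x \<bullet> (A *v x))"
    by (intro continuous_intros matrix_vector_mult_linear_continuous_on[unfolded comp_def])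
  ultimately obtain x where x: "x \<in> K" and max: "\<And>u. u \<in> K \<Longrightarrow> u \<bullet> (A *v u) \<le> x \<bullet> (A *v x)"
    using continuous_attains_sup[OF \<open>compact K\<close>] by blast
  have "y \<bullet> (A *v y) \<le> (x \<bullet> (A *v x)) * (y \<bullet> y)" if "y \<in> W" for y
  proof (cases "y = 0")
    case False
    define u where "u = (1 / norm y) *\<^sub>R y"
    have "u \<in> K" using that False W by (simp add: K_def u_def subspace_scale)
    moreover have "u \<bullet> (A *v u) = (y \<bullet> (A *v y)) / (y \<bullet> y)"
      by (simp add: u_def matrix_vector_mult_scaleR power2_norm_eq_inner[symmetric] power2_eq_square)
    moreover have "y \<bullet> y > 0" using False by simp
    ultimately have "(y \<bullet> (A *v y)) / (y \<bullet> y) \<le> x \<bullet> (A *v x)" using max[of u] by simp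
    with \<open>y \<bullet> y > 0\<close> show ?thesis by (simp add: pos_divide_le_eq mult.commute)
  qed simp
  then show thesis using that x by (auto simp: K_def)
qed

lemma rayleigh_maximiser_is_eigenvector:
  fixes A :: "real^'n^'n"
  assumes sym: "transpose A = A" and W: "subspace W" and inv: "\<And>y. y \<in> W \<Longrightarrow> A *v y \<in> W"
    and x: "x \<in> W" "norm x = 1"
    and max: "\<And>y. y \<in> W \<Longrightarrow> y \<bullet> (A *v y) \<le> (x \<bullet> (A *v x)) * (y \<bullet> y)"
  shows "A *v x = (x \<bullet> (A *v x)) *\<^sub>R x"
proof -
  define l where "l = x \<bullet> (A *v x)"
  define r where "r = A *v x - l *\<^sub>R x"
  have r: "r \<in> W" unfolding r_def using inv x W by (simp add: subspace_diff subspace_scale)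
  have xx: "x \<bullet> x = 1" using x by (simp add: norm_eq_1)
  have rAx: "r \<bullet> (A *v x) = r \<bullet> r + l * (r \<bullet> x)"
    unfolding r_def by (simp add: inner_diff_left inner_diff_right inner_commute algebra_simps)
  \<comment> \<open>first-order condition of the maximum along the line through x in direction r\<close>
  have "2 * t * (r \<bullet> r) + t\<^sup>2 * (r \<bullet> (A *v r) - l * (r \<bullet> r)) \<le> 0" for t
  proof -
    have "x + t *\<^sub>R r \<in> W" using x r W by (simp add: subspace_add subspace_scale)
    from max[OF this] have
      "l + 2 * t * (r \<bullet> (A *v x)) + t\<^sup>2 * (r \<bullet> (A *v r))
        \<le> l * (1 + 2 * t * (r \<bullet> x) + t\<^sup>2 * (r \<bullet> r))"
      using symmetric_matrix_inner_commute[OF sym, of r x] xx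
      by (simp add: l_def matrix_vector_right_distrib matrix_vector_mult_scaleR inner_add_left
          inner_add_right inner_commute power2_eq_square algebra_simps)
    then show ?thesis unfolding rAx by (simp add: algebra_simps)
  qed
  then have "r \<bullet> r = 0" by (rule nonneg_eq_0_if_quadratic_nonpos) simp
  then show ?thesis by (simp add: r_def l_def)
qed

lemma symmetric_matrix_has_eigenvector_in_invariant_subspace:
  fixes A :: "real^'n^'n"
  assumes "transpose A = A" "subspace W" "\<And>y. y \<in> W \<Longrightarrow> A *v y \<in> W" "W \<noteq> {0}"
  obtains x c where "x \<in> W" "x \<noteq> 0" "A *v x = c *\<^sub>R x"
proof -
  obtain x where "x \<in> W" "norm x = 1"
    "\<And>y. y \<in> W \<Longrightarrow> y \<bullet> (A *v y) \<le> (x \<bullet> (A *v x)) * (y \<bullet> y)"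
    using rayleigh_quotient_maximum[OF assms(2,4)] by blast
  with rayleigh_maximiser_is_eigenvector[OF assms(1-3)] that show thesis by fastforce
qed

lemma finite_eigenvalues_symmetric_matrix:
  fixes A :: "real^'n^'n"
  assumes sym: "transpose A = A"
  shows "finite {c. is_eigenvalue A c}"
proof -
  define S where "S = {c. is_eigenvalue A c}"
  define f where "f c = (SOME x. x \<noteq> 0 \<and> A *v x = c *\<^sub>R x)" for c
  have f: "f c \<noteq> 0" "A *v f c = c *\<^sub>R f c" if "c \<in> S" for c
    using someI_ex[of "\<lambda>x. x \<noteq> 0 \<and> A *v x = c *\<^sub>R x"] that
    by (auto simp: S_def is_eigenvalue_def f_def)
  have orth: "f c \<bullet> f d = 0" if "c \<in> S" "d \<in> S" "c \<noteq> d" for c d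
  proof -
    have "c * (f c \<bullet> f d) = d * (f c \<bullet> f d)"
      using symmetric_matrix_inner_commute[OF sym, of "f c" "f d"] f that by simp
    with \<open>c \<noteq> d\<close> show ?thesis by simp
  qed
  have "inj_on f S"
    using orth f(1) by (metis inj_onI inner_eq_zero_iff)
  moreover have "pairwise orthogonal (f ` S)"
    using orth by (auto simp: pairwise_def orthogonal_def)
  then have "finite (f ` S)" by (rule pairwise_orthogonal_imp_finite)
  ultimately show ?thesis unfolding S_def[symmetric] by (rule finite_imageD[rotated])
qed

lemma symmetric_matrix_two_eigenvalues:
  fixes A :: "real^'n^'n"
  assumes sym: "transpose A = A" and eig: "{c. is_eigenvalue A c} \<subseteq> {a, b}"
  shows "A ** A = (a + b) *\<^sub>R A - (a * b) *\<^sub>R mat 1"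
proof -
  define B where "B y = A *v (A *v y) - (a + b) *\<^sub>R (A *v y) + (a * b) *\<^sub>R y" for y
  have "linear B"
    by (simp add: linear_iff B_def matrix_vector_right_distrib matrix_vector_mult_scaleR algebra_simps)
  then have W: "subspace (range B)" by (simp add: linear_subspace_image)
  have "A *v B y = B (A *v y)" for y
    by (simp add: B_def matrix_vector_right_distrib matrix_vector_mult_scaleR
        matrix_vector_mult_diff_distrib)
  then have inv: "A *v x \<in> range B" if "x \<in> range B" for x
    using that by auto
  have B_sym: "B x \<bullet> y = x \<bullet> B y" for x y
    using symmetric_matrix_inner_commute[OF sym]
    by (simp add: B_def inner_diff_left inner_add_left inner_diff_right inner_add_right)
  have B_eigen: "B x = 0" if "A *v x = c *\<^sub>R x" "x \<noteq> 0" for x c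
  proof -
    have "c = a \<or> c = b" using eig that by (auto simp: is_eigenvalue_def)
    then have "c * c - (a + b) * c + a * b = 0" by (auto simp: algebra_simps)
    moreover have "B x = (c * c - (a + b) * c + a * b) *\<^sub>R x"
      using that by (simp add: B_def matrix_vector_mult_scaleR algebra_simps)
    ultimately show ?thesis by simp
  qed
  have "range B = {0}"
  proof (rule ccontr)
    assume "range B \<noteq> {0}"
    then obtain x c where x: "x \<in> range B" "x \<noteq> 0" "A *v x = c *\<^sub>R x"
      using symmetric_matrix_has_eigenvector_in_invariant_subspace[OF sym W inv] by blast
    then obtain w where "x = B w" by blast
    then have "x \<bullet> x = w \<bullet> B x" using B_sym by simp
    then show False using x B_eigen by simp
  qed
  then have "B y = 0" for y by auto
  then have "A *v (A *v y) = (a + b) *\<^sub>R (A *v y) - (a * b) *\<^sub>R y" for y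
    unfolding B_def by (simp add: eq_diff_eq diff_add_eq)
  then have "(A ** A) *v y = ((a + b) *\<^sub>R A - (a * b) *\<^sub>R mat 1) *v y" for y
    by (simp add: matrix_vector_mul_assoc[symmetric] matrix_vector_mult_diff_rdistrib
        scaleR_matrix_vector_assoc[symmetric])
  then show ?thesis by (simp add: matrix_eq)
qed

lemma subset_doubleton_if_card_le_2:
  assumes "finite S" "card S \<le> 2"
  obtains a b where "S \<subseteq> {a, b}"
proof -
  consider "card S = 0" | "card S = 1" | "card S = 2" using assms(2) by linarith
  then show thesis
  proof cases
    case 1
    with assms(1) show ?thesis using that by simp
  next
    case 2
    then obtain a where "S = {a}" by (rule card_1_singletonE)
    then show ?thesis using that by blast
  next
    case 3
    then show ?thesis using that by (auto simp: card_2_iff)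
  qed
qed

lemma transpose_eq_if_in_SG:
  assumes "A \<in> SG E"
  shows "transpose A = A"
  using assms by (simp add: SG_def transpose_def vec_eq_iff)

lemma card_eigenvalues_ge_3_if_unique_common_neighbour:
  fixes A :: "real^'n^'n"
  assumes A: "A \<in> SG E"
    and xz: "x \<noteq> z" "\<not> E x z" and y: "E x y" "E y z"
    and unique: "\<And>k. E x k \<Longrightarrow> E k z \<Longrightarrow> k = y"
  shows "3 \<le> num_distinct_eigenvalues A"
proof (rule ccontr)
  assume few: "\<not> 3 \<le> num_distinct_eigenvalues A"
  have pattern: "i \<noteq> j \<Longrightarrow> A $ i $ j \<noteq> 0 \<longleftrightarrow> E i j" for i j
    using A by (simp add: SG_def)
  have sym: "transpose A = A" using A by (rule transpose_eq_if_in_SG)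
  have "card {c. is_eigenvalue A c} \<le> 2" using few by (simp add: num_distinct_eigenvalues_def)
  with finite_eigenvalues_symmetric_matrix[OF sym]
  obtain a b where "{c. is_eigenvalue A c} \<subseteq> {a, b}"
    by (rule subset_doubleton_if_card_le_2)
  from symmetric_matrix_two_eigenvalues[OF sym this]
  have "(A ** A) $ x $ z = ((a + b) *\<^sub>R A - (a * b) *\<^sub>R mat 1) $ x $ z" by simp
  also have "\<dots> = 0" using pattern[OF xz(1)] xz by (simp add: mat_def)
  moreover have "(A ** A) $ x $ z = A $ x $ y * A $ y $ z"
  proof -
    have "A $ x $ k * A $ k $ z = 0" if "k \<noteq> y" for k
      using that unique pattern[of x k] pattern[of k z] pattern[OF xz(1)] xz(2) by fastforce
    then show ?thesis
      unfolding matrix_matrix_mult_def by (simp add: sum.remove[of UNIV y] sum.neutral)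
  qed
  moreover have "x \<noteq> y" "y \<noteq> z" using xz y by auto
  ultimately show False using pattern[of x y] pattern[of y z] y by simp
qed

lemma qG_attained:
  assumes "simple_graph E"
  obtains A where "A \<in> SG E" "num_distinct_eigenvalues A = qG E"
proof -
  have "(\<chi> i j. if E i j then 1 else 0) \<in> SG E"
    using assms by (auto simp: SG_def simple_graph_def)
  then show thesis
    using that LeastI_ex[of "\<lambda>k. \<exists>A\<in>SG E. num_distinct_eigenvalues A = k"]
    by (auto simp: qG_def)
qed

lemma qG_ge_3_if_unique_common_neighbour:
  assumes "simple_graph E" "x \<noteq> z" "\<not> E x z" "E x y" "E y z"
    "\<And>k. E x k \<Longrightarrow> E k z \<Longrightarrow> k = y"
  shows "3 \<le> qG E"
proof -
  obtain A where A: "A \<in> SG E" "num_distinct_eigenvalues A = qG E"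
    using qG_attained[OF assms(1)] .
  show ?thesis
    using card_eigenvalues_ge_3_if_unique_common_neighbour[OF A(1) assms(2-6)] A(2) by simp
qed

definition successors :: "('n::finite \<Rightarrow> 'n \<Rightarrow> bool) \<Rightarrow> 'n \<Rightarrow> 'n \<Rightarrow> 'n set" where
  "successors E v w = {u. w \<in> predecessors E v u}"

lemma relpowp_gdist:
  assumes "connected_graph E"
  shows "(E ^^ gdist E v w) v w"
proof -
  obtain n where "(E ^^ n) v w"
    using assms by (metis connected_graph_def rtranclp_power)
  then show ?thesis unfolding gdist_def by (rule LeastI)
qed

lemma gdist_adjacent_le:
  assumes "connected_graph E" "E u w"
  shows "gdist E v w \<le> gdist E v u + 1"
proof -
  have "(E ^^ Suc (gdist E v u)) v w"
    using relpowp_Suc_I[OF relpowp_gdist[OF assms(1)] assms(2)] .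
  then show ?thesis unfolding gdist_def by (simp add: Least_le)
qed

lemma gdist_eq_0_imp_eq:
  assumes "connected_graph E" "gdist E v w = 0"
  shows "w = v"
  using relpowp_gdist[OF assms(1), of v w] assms(2) by simp

lemma card_predecessors_layer_1:
  assumes "connected_graph E" "gdist E v w = 1"
  shows "card (predecessors E v w) \<le> 1"
proof -
  have "predecessors E v w \<subseteq> {v}"
    using assms gdist_eq_0_imp_eq[OF assms(1)] by (auto simp: predecessors_def)
  then show ?thesis using card_mono[of "{v}"] by simp
qed

text \<open>With independent layers every neighbour of w is a predecessor or a successor.\<close>
lemma successors_nonempty:
  assumes simple: "simple_graph E" and conn: "connected_graph E"
    and deg: "degree E w \<ge> 3"
    and ind: "\<And>i. independent_set E (layer E v i)"
    and pred: "card (predecessors E v w) \<le> 2"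
  shows "successors E v w \<noteq> {}"
proof
  assume no_succ: "successors E v w = {}"
  have "{u. E w u} \<subseteq> predecessors E v w"
  proof
    fix u assume "u \<in> {u. E w u}"
    then have wu: "E w u" and uw: "E u w" using simple by (auto simp: simple_graph_def)
    have "gdist E v u \<noteq> gdist E v w"
      using ind[of "gdist E v w"] wu by (auto simp: independent_set_def layer_def)
    moreover have "gdist E v w + 1 \<noteq> gdist E v u"
      using no_succ wu by (auto simp: successors_def predecessors_def)
    ultimately show "u \<in> predecessors E v w"
      using gdist_adjacent_le[OF conn wu, where v = v] gdist_adjacent_le[OF conn uw, where v = v] uw
      by (auto simp: predecessors_def)
  qed
  then have "degree E w \<le> card (predecessors E v w)"
    unfolding degree_def by (intro card_mono) auto
  with deg pred show False by simp
qed

lemma constant_on_card_3_without_singleton_fibres: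
  assumes "card S = 3" and fibres: "\<And>y. y \<in> S \<Longrightarrow> \<exists>w\<in>S. w \<noteq> y \<and> f w = f y"
    and "y \<in> S" "y' \<in> S"
  shows "f y = f y'"
proof -
  obtain p q r where S: "S = {p, q, r}" "p \<noteq> q" "q \<noteq> r" "p \<noteq> r"
    using assms(1) by (auto simp: card_3_iff)
  have "f q = f p \<or> f r = f p" "f p = f q \<or> f r = f q" "f p = f r \<or> f q = f r"
    using fibres[of p] fibres[of q] fibres[of r] S by auto
  then have "f p = f q \<and> f q = f r" by metis
  with S assms(3,4) show ?thesis by auto
qed

lemma predecessors_of_predecessors_differ:
  assumes card0: "card (layer E v i) = 3" and card1: "card (layer E v (i + 1)) = 3"
    and pred1: "\<And>w. w \<in> layer E v (i + 1) \<Longrightarrow> card (predecessors E v w) = 2"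
    and pred2: "\<And>w. w \<in> layer E v (i + 2) \<Longrightarrow> card (predecessors E v w) = 2"
    and succ0: "\<And>w. w \<in> layer E v i \<Longrightarrow> successors E v w \<noteq> {}"
    and succ1: "\<And>w. w \<in> layer E v (i + 1) \<Longrightarrow> successors E v w \<noteq> {}"
  shows "\<exists>z\<in>layer E v (i + 2). \<exists>y\<in>predecessors E v z. \<exists>y'\<in>predecessors E v z.
           predecessors E v y \<noteq> predecessors E v y'"
proof (rule ccontr)
  assume same: "\<not> ?thesis"
  have in_layer: "u \<in> layer E v (k + 1)" if "u \<in> successors E v w" "w \<in> layer E v k" for u w k
    using that by (auto simp: successors_def predecessors_def layer_def)
  \<comment> \<open>the co-predecessor of y at any successor of y has the same predecessors as y\<close>
  have "\<exists>w\<in>layer E v (i + 1). w \<noteq> y \<and> predecessors E v w = predecessors E v y"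
    if y: "y \<in> layer E v (i + 1)" for y
  proof -
    obtain z where z: "z \<in> successors E v y" using succ1[OF y] by blast
    then have "z \<in> layer E v (i + 2)" using in_layer[OF z y] by simp
    moreover have "y \<in> predecessors E v z" using z by (simp add: successors_def)
    moreover obtain a b where "predecessors E v z = {a, b}" "a \<noteq> b"
      using pred2[OF \<open>z \<in> layer E v (i + 2)\<close>] by (auto simp: card_2_iff)
    ultimately obtain w where w: "w \<in> predecessors E v z" "w \<noteq> y" by blast
    have "predecessors E v w = predecessors E v y"
      using same \<open>z \<in> layer E v (i + 2)\<close> \<open>y \<in> predecessors E v z\<close> w(1) by blast
    moreover have "w \<in> layer E v (i + 1)"
      using w(1) \<open>z \<in> layer E v (i + 2)\<close> by (simp add: predecessors_def layer_def)
    ultimately show ?thesis using w(2) by blast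
  qed
  then have const: "predecessors E v y = predecessors E v y'"
    if "y \<in> layer E v (i + 1)" "y' \<in> layer E v (i + 1)" for y y'
    using constant_on_card_3_without_singleton_fibres[OF card1] that by blast
  have "layer E v (i + 1) \<noteq> {}" using card1 by (intro notI) simp
  then obtain y0 where y0: "y0 \<in> layer E v (i + 1)" by blast
  have "layer E v i \<subseteq> predecessors E v y0"
  proof
    fix x assume x: "x \<in> layer E v i"
    then obtain y where y: "y \<in> successors E v x" using succ0 by blast
    then have "x \<in> predecessors E v y" by (simp add: successors_def)
    with const[OF in_layer[OF y x] y0] show "x \<in> predecessors E v y0" by simp
  qed
  then have "card (layer E v i) \<le> card (predecessors E v y0)" by (simp add: card_mono)
  with card0 pred1[OF y0] show False by simp
qed

lemma predecessor_separating_pair: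
  assumes "card (predecessors E v z) = 2" and y: "y \<in> predecessors E v z" "y' \<in> predecessors E v z"
    and distinct: "predecessors E v y \<noteq> predecessors E v y'"
  obtains u u' x where "predecessors E v z = {u, u'}"
    "x \<in> predecessors E v u" "x \<notin> predecessors E v u'"
proof -
  have "y \<noteq> y'" using distinct by blast
  then have "{y, y'} \<subseteq> predecessors E v z" "card {y, y'} = 2" using y by auto
  then have z: "predecessors E v z = {y, y'}"
    using assms(1) by (metis card_subset_eq finite)
  from distinct obtain x where "x \<in> predecessors E v y \<and> x \<notin> predecessors E v y'
      \<or> x \<in> predecessors E v y' \<and> x \<notin> predecessors E v y" by blast
  then show thesis
    using that[of y y' x] that[of y' y x] z by (auto simp: insert_commute)
qed

lemma unique_common_neighbour_of_predecessor_chain: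
  assumes conn: "connected_graph E" and z: "predecessors E v z = {y, y'}"
    and x: "x \<in> predecessors E v y" "x \<notin> predecessors E v y'"
  shows "x \<noteq> z" "\<not> E x z" "E x y" "E y z" "\<And>k. E x k \<Longrightarrow> E k z \<Longrightarrow> k = y"
proof -
  have y: "gdist E v x + 1 = gdist E v y" "gdist E v y + 1 = gdist E v z" "E x y" "E y z"
    using x(1) z by (auto simp: predecessors_def)
  then show "x \<noteq> z" "E x y" "E y z" by auto
  show "\<not> E x z" using gdist_adjacent_le[OF conn, of x z v] y by auto
  fix k assume k: "E x k" "E k z"
  then have "gdist E v x + 1 = gdist E v k"
    using gdist_adjacent_le[OF conn, of x k v] gdist_adjacent_le[OF conn, of k z v] y by auto
  then have "x \<in> predecessors E v k" "k \<in> predecessors E v z"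
    using k y by (auto simp: predecessors_def)
  with x(2) z show "k = y" by auto
qed

lemma qG_ge_3_if_consecutive_layers_of_size_3:
  assumes simple: "simple_graph E" and conn: "connected_graph E"
    and deg: "\<And>u. degree E u \<ge> 3" and ind: "\<And>k. independent_set E (layer E v k)"
    and card: "card (layer E v i) = 3" "card (layer E v (i + 1)) = 3"
    and pred0: "\<And>w. w \<in> layer E v i \<Longrightarrow> card (predecessors E v w) \<le> 2"
    and pred1: "\<And>w. w \<in> layer E v (i + 1) \<Longrightarrow> card (predecessors E v w) = 2"
    and pred2: "\<And>w. w \<in> layer E v (i + 2) \<Longrightarrow> card (predecessors E v w) = 2"
  shows "3 \<le> qG E"
proof -
  have succ: "successors E v w \<noteq> {}" if "card (predecessors E v w) \<le> 2" for w
    using successors_nonempty[OF simple conn deg ind that] .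
  obtain z y y' where z: "z \<in> layer E v (i + 2)"
    and "y \<in> predecessors E v z" "y' \<in> predecessors E v z"
    and "predecessors E v y \<noteq> predecessors E v y'"
    using predecessors_of_predecessors_differ[OF card pred1 pred2
        succ[OF pred0] succ[OF pred1[THEN eq_imp_le]]] by blast
  then obtain u u' x where "predecessors E v z = {u, u'}"
    "x \<in> predecessors E v u" "x \<notin> predecessors E v u'"
    using predecessor_separating_pair[OF pred2[OF z]] by blast
  from unique_common_neighbour_of_predecessor_chain[OF conn this]
  show ?thesis by (rule qG_ge_3_if_unique_common_neighbour[OF simple])
qed

theorem mainTheorem6:
  fixes E :: "'n::finite \<Rightarrow> 'n \<Rightarrow> bool" and v :: 'n
  assumes "simple_graph E"
    and "connected_graph E"
    and "\<forall>u. degree E u \<ge> 3"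
    and "\<forall>i. 2 \<le> i \<and> i \<le> ecc E v - 1 \<longrightarrow>
           (\<forall>w\<in>layer E v i. card (predecessors E v w) = 2)"
    and "\<forall>i. independent_set E (layer E v i)"
    and "\<exists>j. 3 \<le> j \<and> j \<le> ecc E v - 1 \<and> card (layer E v j) = 3
            \<and> card (layer E v (j - 1)) = 3 \<and> card (layer E v (j - 2)) = 3"
  shows "qG E \<ge> 3"
proof -
  obtain j where j: "3 \<le> j" "j \<le> ecc E v - 1"
    "card (layer E v (j - 1)) = 3" "card (layer E v (j - 2)) = 3" using assms(6) by blast
  define i where "i = j - 2"
  have i: "j - 1 = i + 1" "1 \<le> i" "i + 2 \<le> ecc E v - 1" using j(1,2) by (auto simp: i_def)
  have pred: "card (predecessors E v w) = 2" if "2 \<le> k" "k \<le> i + 2" "w \<in> layer E v k" for k w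
    using assms(4)[rule_format, of k w] that i(3) by simp
  have pred0: "card (predecessors E v w) \<le> 2" if "w \<in> layer E v i" for w
  proof (cases "i = 1")
    case True
    with that card_predecessors_layer_1[OF assms(2), of v w] show ?thesis by (simp add: layer_def)
  next
    case False
    with that i(2) pred[of i w] show ?thesis by simp
  qed
  have card: "card (layer E v i) = 3" "card (layer E v (i + 1)) = 3"
    using j(3,4) i(1) by (simp_all add: i_def)
  show ?thesis
    by (rule qG_ge_3_if_consecutive_layers_of_size_3[OF assms(1,2) assms(3)[rule_format]
          assms(5)[rule_format] card pred0])
      (use pred[of "i + 1"] pred[of "i + 2"] i(2) in auto)
qed

end
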